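(* Let $d\ge 2$, let $\mathbf f_t(z)=\frac{z^d+t}{z}\in\overline{\mathbb Q}(t)(z)$, and let $\mathbf c=\mathbf A/\mathbf B\in\overline{\mathbb Q}(t)$ with $\mathbf A,\mathbf B\in\overline{\mathbb Q}[t]$ coprime. If $\mathbf c(0)\ne 0$, then $$\widehat h_{\mathbf f}(\mathbf c)=\frac{\deg(\mathbf f_t(\mathbf c(t)))}{d}=\frac{\deg(\mathbf f_t^2(\mathbf c(t)))}{d^2}.$$
   Context: For a rational function $g\in\overline{\mathbb Q}(t)$, $\deg(g)$ is the maximum of the degrees of numerator and denominator in lowest terms. $\widehat h_{\mathbf f}(\mathbf c)=\lim_{n\to\infty}\deg(\mathbf f_t^n(\mathbf c(t)))/d^n$, where $\mathbf f_t^n$ denotes the $n$-th iterate of $z\mapsto \mathbf f_t(z)$. The condition $\mathbf c(0)\neq 0$ means $\mathbf A(0)\ne 0$. *)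

theory Defs
  imports Complex_Main "HOL-Computational_Algebra.Computational_Algebra"
    "HOL-Computational_Algebra.Normalized_Fraction" "HOL-Computational_Algebra.Field_as_Ring"
begin

text \<open>Rational functions in t over the algebraic numbers are modelled as elements of the
  fraction field of complex polynomials (\<open>complex poly fract\<close>) whose numerator and
  denominator have algebraic coefficients.\<close>

type_synonym ratfun = "complex poly fract"

definition tvar :: ratfun where
  "tvar = Fract [:0, 1:] 1"

definition rdeg :: "ratfun \<Rightarrow> nat" where
  "rdeg g = max (degree (fst (quot_of_fract g))) (degree (snd (quot_of_fract g)))"

definition fmap :: "nat \<Rightarrow> ratfun \<Rightarrow> ratfun" where
  "fmap d z = (z ^ d + tvar) / z"

definition canon_height :: "nat \<Rightarrow> ratfun \<Rightarrow> real" where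
  "canon_height d c = lim (\<lambda>n. real (rdeg ((fmap d ^^ n) c)) / real d ^ n)"

end

theory Submission
  imports Defs
begin

text \<open>
  For coprime \<open>P, Q\<close> with \<open>t \<nmid> P\<close>, \<open>f\<^sub>t(P/Q) = (P^d + t Q^d) / (P Q^(d-1))\<close> is again in
  lowest terms, and its numerator again satisfies \<open>t \<nmid> N\<close>. The two summands of the numerator
  have degrees \<open>d deg P\<close> and \<open>d deg Q + 1\<close>, which never coincide, so the numerator has
  degree \<open>max (d deg P) (d deg Q + 1)\<close>, strictly more than the denominator. Hence after one
  step the numerator dominates, and from then on each step multiplies the degree by exactly
  \<open>d\<close>: \<open>deg f\<^sub>t^(n+1)(c) = d^n deg f\<^sub>t(c)\<close>, so \<open>deg f\<^sub>t^n(c) / d^n\<close> is constant for \<open>n \<ge> 1\<close>.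
\<close>

definition fmap_num :: "nat \<Rightarrow> complex poly \<Rightarrow> complex poly \<Rightarrow> complex poly" where
  "fmap_num d P Q = P ^ d + [:0, 1:] * Q ^ d"

definition fmap_den :: "nat \<Rightarrow> complex poly \<Rightarrow> complex poly \<Rightarrow> complex poly" where
  "fmap_den d P Q = P * Q ^ (d - 1)"

lemma rdeg_Fract:
  fixes P Q :: "complex poly"
  assumes "Q \<noteq> 0" "coprime P Q"
  shows "rdeg (Fract P Q) = max (degree P) (degree Q)"
proof -
  have quot: "quot_of_fract (Fract P Q) = normalize_quot (P, Q)"
    using quot_of_fract_quot_to_fract[of "(P, Q)"] by (simp add: quot_to_fract_def)
  define u where "u = unit_factor Q"
  have u0: "u \<noteq> 0" using assms(1) by (simp add: u_def)
  have u_deg: "degree u = 0"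
    using is_unit_iff_degree[OF u0] assms(1) by (simp add: u_def)
  have "gcd P Q = 1" using assms(2) by (simp add: coprime_iff_gcd_eq_1)
  hence P: "P = fst (normalize_quot (P, Q)) * u" and Q: "Q = snd (normalize_quot (P, Q)) * u"
    using normalize_quot_aux[OF assms(1), of P] by (simp_all add: u_def)
  have "degree P = degree (fst (normalize_quot (P, Q)))"
    by (subst P, cases "fst (normalize_quot (P, Q)) = 0") (auto simp: degree_mult_eq u0 u_deg)
  moreover have "degree Q = degree (snd (normalize_quot (P, Q)))"
    by (subst Q, subst degree_mult_eq) (auto simp: u0 u_deg)
  ultimately show ?thesis by (simp add: rdeg_def quot)
qed

lemma Fract_power: "b \<noteq> 0 \<Longrightarrow> Fract a b ^ n = Fract (a ^ n) (b ^ n)"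
  by (induction n) (simp_all add: One_fract_def)

lemma fmap_Fract:
  fixes P Q :: "complex poly"
  assumes "d \<ge> 1" "P \<noteq> 0" "Q \<noteq> 0"
  shows "fmap d (Fract P Q) = Fract (fmap_num d P Q) (fmap_den d P Q)"
proof -
  obtain k where k: "d = Suc k" using assms(1) by (cases d) auto
  have "Fract P Q ^ d + tvar = Fract (fmap_num d P Q) (Q ^ d)"
    using assms(3) by (simp add: fmap_num_def tvar_def Fract_power)
  hence "fmap d (Fract P Q) = Fract (fmap_num d P Q * Q) (Q ^ d * P)"
    by (simp add: fmap_def)
  also have "\<dots> = Fract (fmap_num d P Q) (fmap_den d P Q)"
    using assms(2,3) unfolding fmap_den_def k by (subst eq_fract) (simp_all add: algebra_simps)
  finally show ?thesis .
qed

lemma fmap_den_nonzero: "P \<noteq> 0 \<Longrightarrow> Q \<noteq> 0 \<Longrightarrow> fmap_den d P Q \<noteq> 0"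
  by (simp add: fmap_den_def)

lemma poly_fmap_num_0: "poly P 0 \<noteq> 0 \<Longrightarrow> poly (fmap_num d P Q) 0 \<noteq> 0"
  by (simp add: fmap_num_def)

lemma coprime_fmap_num_den:
  fixes P Q :: "complex poly"
  assumes "d \<ge> 1" "coprime P Q" "poly P 0 \<noteq> 0"
  shows "coprime (fmap_num d P Q) (fmap_den d P Q)"
proof -
  obtain k where k: "d = Suc k" using assms(1) by (cases d) auto
  have "coprime [:0, 1:] P"
    by (rule prime_elem_imp_coprime[OF prime_elem_linear_field_poly[of 1 0]])
       (use assms(3) dvd_iff_poly_eq_0[of 0 P] in auto)
  hence "coprime P ([:0, 1:] * Q ^ d)"
    using assms(2) by (simp add: coprime_commute del: mult_pCons_left)
  hence "coprime P (P ^ k * P + [:0, 1:] * Q ^ d)"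
    by (simp only: gcd_add_mult coprime_iff_gcd_eq_1)
  hence num_P: "coprime (fmap_num d P Q) P"
    by (simp add: fmap_num_def k coprime_commute algebra_simps)
  have "coprime Q (P ^ d)" using assms(2) by (simp add: coprime_commute)
  hence "coprime Q (([:0, 1:] * Q ^ k) * Q + P ^ d)"
    by (simp only: gcd_add_mult coprime_iff_gcd_eq_1)
  hence num_Q: "coprime (fmap_num d P Q) Q"
    by (simp add: fmap_num_def k coprime_commute algebra_simps)
  show ?thesis using num_P num_Q by (simp add: fmap_den_def)
qed

lemma degree_fmap_num:
  fixes P Q :: "complex poly"
  assumes "d \<ge> 2" "Q \<noteq> 0"
  shows "degree (fmap_num d P Q) = max (d * degree P) (d * degree Q + 1)"
proof -
  have deg_P: "degree (P ^ d) = d * degree P"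
    using assms(1) by (cases "P = 0") (simp_all add: degree_power_eq power_0_left)
  have deg_tQ: "degree ([:0, 1:] * Q ^ d) = d * degree Q + 1"
    using assms(2) by (subst degree_mult_eq) (auto simp: degree_power_eq)
  \<comment> \<open>the two degrees differ since \<open>d \<nmid> 1\<close>\<close>
  have "d * degree P \<noteq> d * degree Q + 1"
  proof
    assume "d * degree P = d * degree Q + 1"
    hence "d dvd 1" by (metis dvd_add_right_iff dvd_triv_left)
    thus False using assms(1) by simp
  qed
  thus ?thesis
    unfolding fmap_num_def using deg_P deg_tQ
    by (cases "d * degree P < d * degree Q + 1")
       (auto simp: degree_add_eq_left degree_add_eq_right max_def)
qed

lemma degree_fmap_den:
  fixes P Q :: "complex poly"
  assumes "P \<noteq> 0" "Q \<noteq> 0"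
  shows "degree (fmap_den d P Q) = degree P + (d - 1) * degree Q"
  using assms by (simp add: fmap_den_def degree_mult_eq degree_power_eq)

lemma degree_fmap_den_less_num:
  fixes P Q :: "complex poly"
  assumes "d \<ge> 2" "P \<noteq> 0" "Q \<noteq> 0"
  shows "degree (fmap_den d P Q) < degree (fmap_num d P Q)"
proof -
  have "degree P + (d - 1) * degree Q < max (d * degree P) (d * degree Q + 1)"
  proof (cases "degree P \<le> degree Q")
    case True
    have "degree P + (d - 1) * degree Q \<le> degree Q + (d - 1) * degree Q" using True by simp
    also have "\<dots> = d * degree Q" using assms(1) by (cases d) auto
    finally show ?thesis by simp
  next
    case False
    hence "degree P + (d - 1) * degree Q < degree P + (d - 1) * degree P"
      using assms(1) by simp
    also have "\<dots> = d * degree P" using assms(1) by (cases d) auto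
    finally show ?thesis by simp
  qed
  thus ?thesis using assms by (simp add: degree_fmap_num degree_fmap_den)
qed

lemma rdeg_fmap_Fract:
  fixes P Q :: "complex poly"
  assumes "d \<ge> 2" "Q \<noteq> 0" "coprime P Q" "poly P 0 \<noteq> 0"
  shows "rdeg (fmap d (Fract P Q)) = degree (fmap_num d P Q)"
proof -
  have "P \<noteq> 0" using assms(4) by auto
  with assms show ?thesis
    using rdeg_Fract[OF fmap_den_nonzero coprime_fmap_num_den] degree_fmap_den_less_num
    by (simp add: fmap_Fract)
qed

lemma rdeg_fmap_iterate:
  fixes P Q :: "complex poly"
  assumes "d \<ge> 2" "Q \<noteq> 0" "coprime P Q" "poly P 0 \<noteq> 0"
  shows "rdeg ((fmap d ^^ Suc n) (Fract P Q)) = d ^ n * rdeg (fmap d (Fract P Q))"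
  using assms(2-4)
proof (induction n arbitrary: P Q)
  case 0
  show ?case by simp
next
  case (Suc n)
  define N where "N = fmap_num d P Q"
  define D where "D = fmap_den d P Q"
  have "P \<noteq> 0" using Suc.prems(3) by auto
  hence D: "D \<noteq> 0" "coprime N D" "poly N 0 \<noteq> 0" "degree D < degree N"
    and step: "fmap d (Fract P Q) = Fract N D"
    using Suc.prems assms(1) unfolding N_def D_def
    by (simp_all add: fmap_den_nonzero coprime_fmap_num_den poly_fmap_num_0
        degree_fmap_den_less_num fmap_Fract)
  \<comment> \<open>once the numerator dominates, the next numerator has degree exactly \<open>d deg N\<close>\<close>
  have "d * (degree D + 1) \<le> d * degree N"
    using D(4) by (intro mult_le_mono2) simp
  hence "rdeg (fmap d (Fract N D)) = d * degree N"
    using D assms(1) by (simp add: rdeg_fmap_Fract degree_fmap_num)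
  moreover have "degree N = rdeg (fmap d (Fract P Q))"
    using Suc.prems assms(1) by (simp add: rdeg_fmap_Fract N_def)
  ultimately show ?case
    using Suc.IH[OF D(1-3)] by (simp add: funpow_swap1 step)
qed

theorem proposition3p1:
  fixes d :: nat and A B :: "complex poly"
  assumes "d \<ge> 2"
    and "\<forall>i. algebraic (coeff A i)" and "\<forall>i. algebraic (coeff B i)"
    and "B \<noteq> 0" and "coprime A B"
    and "poly A 0 \<noteq> 0"
  shows "(\<lambda>n. real (rdeg ((fmap d ^^ n) (Fract A B))) / real d ^ n)
            \<longlonglongrightarrow> real (rdeg (fmap d (Fract A B))) / real d
    \<and> canon_height d (Fract A B) = real (rdeg (fmap d (Fract A B))) / real d
    \<and> real (rdeg (fmap d (Fract A B))) / real d
        = real (rdeg ((fmap d ^^ 2) (Fract A B))) / real d ^ 2"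
proof -
  define h where "h = real (rdeg (fmap d (Fract A B))) / real d"
  have const: "real (rdeg ((fmap d ^^ Suc n) (Fract A B))) / real d ^ Suc n = h" for n
    unfolding rdeg_fmap_iterate[OF assms(1,4-6)] h_def using assms(1) by (simp add: field_simps)
  have lim: "(\<lambda>n. real (rdeg ((fmap d ^^ n) (Fract A B))) / real d ^ n) \<longlonglongrightarrow> h"
    by (rule LIMSEQ_imp_Suc) (simp only: const tendsto_const)
  moreover have "canon_height d (Fract A B) = h"
    unfolding canon_height_def using lim by (rule limI)
  moreover have "h = real (rdeg ((fmap d ^^ 2) (Fract A B))) / real d ^ 2"
    using const[of 1] by (simp add: numeral_2_eq_2)
  ultimately show ?thesis unfolding h_def by simp
qed

end
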